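(* Let $t$ be a positive odd integer. Then $$\sum_{n\geq1} a_t^{\star}(n) \, q^n=\frac{q^t\big(1+(t-1)q^t+tq^{2t}\big)}{(1-q^{2t})(1+q^t)}\cdot (-q;q^2)_{\infty},$$ and consequently, for every integer $n\ge1$, $$a_t^{\star}(n)=\sum_{j\geq 1}\Big((-1)^{j-1}j \, sc(n-tj)+t\, sc(n-2tj)\Big)=\sum_{j\geq 1}\Big((-1)^{j-1}j \, q^{\star}(n-tj)+t\, q^{\star}(n-2tj)\Big).$$
   Context: A partition $\lambda=(\lambda_1\ge\dots\ge\lambda_\ell\ge 1)$ of $n$ has $\sum_i\lambda_i=n$; its Young diagram has $\lambda_i$ left-justified cells in row $i$. The conjugate $\lambda'$ is obtained by reflecting the Young diagram in the main diagonal; $\lambda$ is self-conjugate if $\lambda=\lambda'$, and $\mathcal{SC}$ is the set of self-conjugate partitions. The hook length of the cell $(i,j)$ is the number of cells to its right in row $i$ plus the number below it in column $j$ plus $1$; $n_t(\lambda)$ is the number of cells of $\lambda$ with hook length $t$. Define $a_t^{\star}(n)=\sum_{\lambda\in\mathcal{SC},\,\lambda\vdash n} n_t(\lambda)$. $sc(m)$ is the number of self-conjugate partitions of $m$, $q^{\star}(m)$ is the number of partitions of $m$ into distinct odd parts, with $sc(0)=q^\star(0)=1$ and $sc(m)=q^\star(m)=0$ for $m<0$. $(a;q)_\infty=\prod_{j\ge0}(1-aq^j)$. *)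

theory Defs
  imports Complex_Main "HOL-Computational_Algebra.Formal_Power_Series"
begin

definition is_partition :: "nat list \<Rightarrow> bool" where
  "is_partition lam \<longleftrightarrow> sorted_wrt (\<ge>) lam \<and> (\<forall>x\<in>set lam. 0 < x)"

definition partition_of :: "nat list \<Rightarrow> nat \<Rightarrow> bool" where
  "partition_of lam n \<longleftrightarrow> is_partition lam \<and> sum_list lam = n"

definition conj_part :: "nat list \<Rightarrow> nat list" where
  "conj_part lam = map (\<lambda>j. length (filter (\<lambda>x. j \<le> x) lam)) [1..<Suc (foldr max lam 0)]"

definition self_conj :: "nat list \<Rightarrow> bool" where
  "self_conj lam \<longleftrightarrow> conj_part lam = lam"

definition cells :: "nat list \<Rightarrow> (nat \<times> nat) set" where
  "cells lam = {(i, j). 1 \<le> i \<and> i \<le> length lam \<and> 1 \<le> j \<and> j \<le> lam ! (i - 1)}"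

text \<open>Hook length: arm (cells to the right) + leg (cells below) + 1.\<close>
definition hook :: "nat list \<Rightarrow> nat \<Rightarrow> nat \<Rightarrow> nat" where
  "hook lam i j = (lam ! (i - 1) - j) + (conj_part lam ! (j - 1) - i) + 1"

definition n_hook :: "nat \<Rightarrow> nat list \<Rightarrow> nat" where
  "n_hook t lam = card {c \<in> cells lam. hook lam (fst c) (snd c) = t}"

definition a_star :: "nat \<Rightarrow> nat \<Rightarrow> nat" where
  "a_star t n = (\<Sum>lam \<in> {lam. partition_of lam n \<and> self_conj lam}. n_hook t lam)"

definition sc :: "int \<Rightarrow> nat" where
  "sc m = (if m < 0 then 0 else card {lam. partition_of lam (nat m) \<and> self_conj lam})"

definition qstar :: "int \<Rightarrow> nat" where
  "qstar m = (if m < 0 then 0 else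
     card {S :: nat set. finite S \<and> (\<forall>x\<in>S. odd x) \<and> \<Sum>S = nat m})"

text \<open>(-q;q^2)_infinity = prod_{j>=0} (1 + q^(2j+1)), as a limit of partial products in the
  standard (X-adic) topology on formal power series.\<close>
definition odd_poch :: "real fps" where
  "odd_poch = lim (\<lambda>N. \<Prod>j<N. 1 + fps_X ^ (2 * j + 1))"

end

(* A self-conjugate partition is determined by its Frobenius coordinates
   D = {lam_i - i | lam_i >= i}, a finite set of naturals of weight sum (2d + 1) = |lam|, and
   every such set arises by nesting hooks.  With p_r = lam_(r+1) - r - 1 (frob lam r), the hook length of the
   cell (r, c) is p_r + p_c + 1, and the values of p are the elements of D together with -1 - e
   for e not in D.  Hence the number of hooks of length t is determined by D alone: it is
   2 * slides_down t D + complement_pairs t D.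
   For odd t = 2c + 1, sliding one element d of D down to d - t, deleting a pair d, 2c - d, or
   deleting the centre c are bijections between sets of weight n and sets of weight n - t or
   n - 2t.  They give linear recurrences for the sums over all D of weight n, i.e. identities
   between generating functions in u = q^t.  Solving them, and expanding
   u (1 + (t - 1) u + t u^2) / ((1 - u^2)(1 + u)) = u / (1 + u)^2 + t u^2 / (1 - u^2),
   yields both the product formula and the coefficient formulas. *)

theory Submission
  imports Defs
begin

section \<open>Rows, columns and self-conjugacy\<close>

definition row :: "nat list \<Rightarrow> nat \<Rightarrow> nat" where
  "row lam r = (if r < length lam then lam ! r else 0)"

definition col :: "nat list \<Rightarrow> nat \<Rightarrow> nat" where
  "col lam c = length (filter (\<lambda>x. Suc c \<le> x) lam)"

lemma row_antimono:
  assumes "is_partition lam" "r \<le> s"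
  shows "row lam s \<le> row lam r"
proof (cases "s < length lam")
  case True
  with assms sorted_wrt_nth_less[of "(\<ge>)" lam r s] show ?thesis
    by (cases "r = s") (auto simp: row_def is_partition_def)
qed (simp add: row_def)

lemma le_row_0: "is_partition lam \<Longrightarrow> x \<in> set lam \<Longrightarrow> x \<le> row lam 0"
  by (metis in_set_conv_nth row_def row_antimono le0)

lemma col_eq_card: "col lam c = card {i. i < length lam \<and> c < lam ! i}"
  by (simp add: col_def length_filter_conv_card Suc_le_eq)

lemma less_col_iff:
  assumes P: "is_partition lam"
  shows "r < col lam c \<longleftrightarrow> c < row lam r"
proof
  assume c: "c < row lam r"
  have "{..r} \<subseteq> {i. i < length lam \<and> c < lam ! i}"
  proof
    fix i assume "i \<in> {..r}"
    with c row_antimono[OF P, of i r] show "i \<in> {i. i < length lam \<and> c < lam ! i}"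
      by (auto simp: row_def split: if_splits)
  qed
  then have "card {..r} \<le> col lam c"
    unfolding col_eq_card by (intro card_mono) auto
  then show "r < col lam c" by simp
next
  assume r: "r < col lam c"
  show "c < row lam r"
  proof (rule ccontr)
    assume not_less: "\<not> c < row lam r"
    have "{i. i < length lam \<and> c < lam ! i} \<subseteq> {..<r}"
    proof
      fix i assume "i \<in> {i. i < length lam \<and> c < lam ! i}"
      with not_less row_antimono[OF P, of r i] show "i \<in> {..<r}"
        by (cases "r \<le> i") (auto simp: row_def)
    qed
    then have "col lam c \<le> r"
      unfolding col_eq_card using card_mono[of "{..<r}"] by fastforce
    with r show False by simp
  qed
qed

lemma foldr_max_eq_row_0: "is_partition lam \<Longrightarrow> foldr max lam 0 = row lam 0"
proof (induction lam)
  case (Cons x xs)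
  have "\<forall>y\<in>set xs. y \<le> x" using Cons.prems by (auto simp: is_partition_def)
  moreover have "foldr max xs 0 \<le> x" if "\<forall>y\<in>set xs. y \<le> x"
    using that by (induction xs) auto
  ultimately show ?case by (simp add: row_def)
qed (simp add: row_def)

lemma conj_part_nth: "c < foldr max lam 0 \<Longrightarrow> conj_part lam ! c = col lam c"
  unfolding conj_part_def col_def by (subst nth_map) (auto simp del: upt_Suc)

lemma self_conj_length:
  assumes "is_partition lam" "self_conj lam"
  shows "length lam = row lam 0"
proof -
  have "length (conj_part lam) = foldr max lam 0"
    by (simp add: conj_part_def del: upt_Suc)
  then show ?thesis
    using assms(2) foldr_max_eq_row_0[OF assms(1)] by (simp add: self_conj_def)
qed

lemma self_conj_col:
  assumes P: "is_partition lam" and S: "self_conj lam"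
  shows "col lam c = row lam c"
proof (cases "c < length lam")
  case True
  then have "conj_part lam ! c = col lam c"
    using conj_part_nth[of c lam] self_conj_length[OF P S] foldr_max_eq_row_0[OF P] by simp
  then show ?thesis using S True by (simp add: self_conj_def row_def)
next
  case False
  then have "\<not> 0 < col lam c"
    using less_col_iff[OF P, of 0 c] self_conj_length[OF P S] by simp
  with False show ?thesis by (simp add: row_def)
qed

lemma self_conj_less_row_iff:
  "is_partition lam \<Longrightarrow> self_conj lam \<Longrightarrow> r < row lam c \<longleftrightarrow> c < row lam r"
  using less_col_iff[of lam r c] self_conj_col[of lam c] by simp

section \<open>Frobenius coordinates and hook lengths\<close>

definition frob :: "nat list \<Rightarrow> nat \<Rightarrow> int" where
  "frob lam r = int (row lam r) - int r - 1"

lemma frob_strict_antimono: "is_partition lam \<Longrightarrow> r < s \<Longrightarrow> frob lam s < frob lam r"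
  using row_antimono[of lam r s] by (simp add: frob_def)

lemma frob_negative: "length lam \<le> r \<Longrightarrow> frob lam r < 0"
  by (simp add: frob_def row_def)

lemma inj_frob: "is_partition lam \<Longrightarrow> inj (frob lam)"
  by (metis linorder_inj_onI' frob_strict_antimono less_irrefl)

lemma frob_bounds:
  assumes "is_partition lam" "self_conj lam"
  shows "- int r - 1 \<le> frob lam r" "frob lam r < int (length lam)"
  using row_antimono[OF assms(1), of 0 r] self_conj_length[OF assms] by (simp_all add: frob_def)

lemma frob_hook_pos_iff:
  "is_partition lam \<Longrightarrow> self_conj lam \<Longrightarrow> 0 < frob lam r + frob lam c + 1 \<longleftrightarrow> c < row lam r"
  using self_conj_less_row_iff[of lam r c] by (auto simp: frob_def)

lemma frob_hook_ne_0:
  "is_partition lam \<Longrightarrow> self_conj lam \<Longrightarrow> frob lam r + frob lam c + 1 \<noteq> 0"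
  using self_conj_less_row_iff[of lam r c] by (auto simp: frob_def)

text \<open>The values of \<open>frob lam\<close> and \<open>-1 - frob lam\<close> on \<open>{..<K}\<close> are \<open>2K\<close> distinct integers
  in \<open>[-K, K)\<close> (distinct by \<open>frob_hook_ne_0\<close>), hence fill that interval.\<close>
lemma frob_range_complement:
  assumes P: "is_partition lam" and S: "self_conj lam"
  shows "z \<in> range (frob lam) \<longleftrightarrow> -1 - z \<notin> range (frob lam)"
proof -
  have ne: "frob lam r \<noteq> -1 - frob lam c" for r c
    using frob_hook_ne_0[OF P S, of r c] by linarith
  then have not_both: "\<not> (x \<in> range (frob lam) \<and> -1 - x \<in> range (frob lam))" for x
    by (metis rangeE)
  define K where "K = length lam + nat \<bar>z\<bar> + 1"
  define A where "A = frob lam ` {..<K}"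
  define B where "B = (\<lambda>c. -1 - frob lam c) ` {..<K}"
  have inj: "inj (frob lam)" by (rule inj_frob[OF P])
  then have "inj (\<lambda>c. -1 - frob lam c)" by (auto simp: inj_def)
  with inj have "card A = K" "card B = K"
    unfolding A_def B_def by (simp_all add: card_image inj_on_subset)
  moreover have "A \<inter> B = {}"
    using ne unfolding A_def B_def by blast
  ultimately have "card (A \<union> B) = card {- int K..<int K}"
    by (simp add: card_Un_disjoint A_def B_def)
  moreover have "A \<union> B \<subseteq> {- int K..<int K}"
  proof -
    have "frob lam r \<in> {- int K..<int K} \<and> -1 - frob lam r \<in> {- int K..<int K}" if "r < K" for r
      using frob_bounds[OF P S, of r] that unfolding K_def by auto
    then show ?thesis unfolding A_def B_def by auto
  qed
  ultimately have "A \<union> B = {- int K..<int K}"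
    by (intro card_subset_eq) auto
  then have "z \<in> A \<union> B" unfolding K_def by auto
  then have "z \<in> range (frob lam) \<or> -1 - z \<in> range (frob lam)"
    unfolding A_def B_def by (auto simp: algebra_simps)
  with not_both[of z] show ?thesis by blast
qed

text \<open>Cells are 1-indexed in \<open>cells\<close> and \<open>hook\<close>, while \<open>row\<close> and \<open>frob\<close> are 0-indexed.\<close>
lemma hook_eq_frob:
  assumes P: "is_partition lam" and S: "self_conj lam" and c: "c < row lam r"
  shows "int (hook lam (Suc r) (Suc c)) = frob lam r + frob lam c + 1"
proof -
  have r: "r < row lam c" using self_conj_less_row_iff[OF P S] c by blast
  have "conj_part lam ! c = lam ! c" using S by (simp add: self_conj_def)
  with c r show ?thesis
    by (simp add: hook_def frob_def row_def split: if_splits)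
qed

lemma card_pairs_sum_eq:
  fixes f :: "'a \<Rightarrow> int"
  assumes inj: "inj f"
  shows "card {(r, c). f r + f c + 1 = T} = card {x \<in> range f. T - 1 - x \<in> range f}"
proof -
  let ?pairs = "{(r, c). f r + f c + 1 = T}"
  have inj_pairs: "inj_on (\<lambda>(r, c). f r) ?pairs"
  proof (rule inj_onI)
    fix x y assume xy: "x \<in> ?pairs" "y \<in> ?pairs" "(\<lambda>(r, c). f r) x = (\<lambda>(r, c). f r) y"
    obtain r c r' c' where "x = (r, c)" "y = (r', c')" by fastforce
    with xy have "f r = f r'" "f c = f c'" by auto
    with \<open>x = (r, c)\<close> \<open>y = (r', c')\<close> show "x = y" using injD[OF inj] by simp
  qed
  have image_pairs: "(\<lambda>(r, c). f r) ` ?pairs = {x \<in> range f. T - 1 - x \<in> range f}"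
  proof (intro set_eqI iffI)
    fix x assume "x \<in> {x \<in> range f. T - 1 - x \<in> range f}"
    then obtain r c where "x = f r" "T - 1 - x = f c" by blast
    then show "x \<in> (\<lambda>(r, c). f r) ` ?pairs"
      by (intro image_eqI[of _ _ "(r, c)"]) auto
  next
    fix x assume "x \<in> (\<lambda>(r, c). f r) ` ?pairs"
    then obtain r c where "x = f r" "T - 1 - x = f c" by auto
    then show "x \<in> {x \<in> range f. T - 1 - x \<in> range f}" by (metis (mono_tags) mem_Collect_eq rangeI)
  qed
  show ?thesis using card_image[OF inj_pairs] unfolding image_pairs by simp
qed

lemma n_hook_eq_card_frob:
  assumes P: "is_partition lam" and S: "self_conj lam" and t: "0 < t"
  shows "n_hook t lam = card {x \<in> range (frob lam). int t - 1 - x \<in> range (frob lam)}"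
proof -
  let ?pairs = "{(r, c). frob lam r + frob lam c + 1 = int t}"
  have "{x \<in> cells lam. hook lam (fst x) (snd x) = t} = (\<lambda>(r, c). (Suc r, Suc c)) ` ?pairs"
  proof (intro set_eqI iffI)
    fix x assume x: "x \<in> {x \<in> cells lam. hook lam (fst x) (snd x) = t}"
    then obtain r c where rc: "x = (Suc r, Suc c)" "c < row lam r" "hook lam (Suc r) (Suc c) = t"
      by (cases x) (auto simp: cells_def row_def not0_implies_Suc gr0_conv_Suc Suc_le_eq)
    with hook_eq_frob[OF P S rc(2)] show "x \<in> (\<lambda>(r, c). (Suc r, Suc c)) ` ?pairs" by auto
  next
    fix x assume "x \<in> (\<lambda>(r, c). (Suc r, Suc c)) ` ?pairs"
    then obtain r c where rc: "x = (Suc r, Suc c)" "frob lam r + frob lam c + 1 = int t" by auto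
    with t have "0 < frob lam r + frob lam c + 1" by simp
    then have "c < row lam r" using frob_hook_pos_iff[OF P S] by blast
    with rc hook_eq_frob[OF P S this] show "x \<in> {x \<in> cells lam. hook lam (fst x) (snd x) = t}"
      by (auto simp: cells_def row_def split: if_splits)
  qed
  moreover have "inj_on (\<lambda>(r, c). (Suc r, Suc c)) ?pairs" by (auto simp: inj_on_def)
  ultimately show ?thesis
    unfolding n_hook_def using card_pairs_sum_eq[OF inj_frob[OF P]] by (simp add: card_image)
qed

definition frob_set :: "nat list \<Rightarrow> nat set" where
  "frob_set lam = {d. int d \<in> range (frob lam)}"

definition frob_range :: "nat set \<Rightarrow> int set" where
  "frob_range D = int ` D \<union> (\<lambda>e. -1 - int e) ` (- D)"

lemma mem_frob_range_iff:
  "z \<in> frob_range D \<longleftrightarrow> (0 \<le> z \<and> nat z \<in> D) \<or> (z < 0 \<and> nat (-1 - z) \<notin> D)"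
proof
  assume "(0 \<le> z \<and> nat z \<in> D) \<or> (z < 0 \<and> nat (-1 - z) \<notin> D)"
  then show "z \<in> frob_range D"
  proof
    assume "0 \<le> z \<and> nat z \<in> D"
    then have "z \<in> int ` D" by (metis image_eqI int_nat_eq)
    then show ?thesis by (simp add: frob_range_def)
  next
    assume z: "z < 0 \<and> nat (-1 - z) \<notin> D"
    then have "z = -1 - int (nat (-1 - z))" by simp
    with z have "z \<in> (\<lambda>e. -1 - int e) ` (- D)" by blast
    then show ?thesis by (simp add: frob_range_def)
  qed
qed (auto simp: frob_range_def)

lemma range_frob_eq:
  assumes "is_partition lam" "self_conj lam"
  shows "range (frob lam) = frob_range (frob_set lam)"
proof (intro set_eqI)
  fix z
  show "z \<in> range (frob lam) \<longleftrightarrow> z \<in> frob_range (frob_set lam)"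
  proof (cases "0 \<le> z")
    case False
    then have "int (nat (-1 - z)) = -1 - z" by simp
    with False frob_range_complement[OF assms, of z] show ?thesis
      by (simp add: mem_frob_range_iff frob_set_def)
  qed (simp add: mem_frob_range_iff frob_set_def)
qed

definition slides_down :: "nat \<Rightarrow> nat set \<Rightarrow> nat" where
  "slides_down t D = card {d \<in> D. t \<le> d \<and> d - t \<notin> D}"

definition complement_pairs :: "nat \<Rightarrow> nat set \<Rightarrow> nat" where
  "complement_pairs t D = card {d \<in> D. d < t \<and> t - 1 - d \<in> D}"

text \<open>A pair \<open>x + y = t - 1\<close> in \<open>frob_range D\<close> either has both entries in \<open>D\<close>, or exactly one
  entry is negative: \<open>x = -1 - e\<close> with \<open>e \<notin> D\<close> and \<open>e + t \<in> D\<close>, or symmetrically.\<close>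
lemma frob_range_pairs_subset:
  "{x \<in> frob_range D. int t - 1 - x \<in> frob_range D}
    \<subseteq> int ` {d \<in> D. t \<le> d \<and> d - t \<notin> D} \<union> int ` {d \<in> D. d < t \<and> t - 1 - d \<in> D}
      \<union> (\<lambda>e. -1 - int e) ` {e. e \<notin> D \<and> e + t \<in> D}"
  (is "_ \<subseteq> int ` ?A1 \<union> int ` ?A2 \<union> _ ` ?A3")
proof
  fix x assume x: "x \<in> {x \<in> frob_range D. int t - 1 - x \<in> frob_range D}"
  show "x \<in> int ` ?A1 \<union> int ` ?A2 \<union> (\<lambda>e. -1 - int e) ` ?A3"
  proof (cases "0 \<le> x")
    case True
    define d where "d = nat x"
    have xd: "x = int d" "d \<in> D"
      using x True by (simp_all add: d_def mem_frob_range_iff)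
    show ?thesis
    proof (cases "t \<le> d")
      case True
      have "nat (-1 - (int t - 1 - x)) = d - t" using True xd by simp
      then have "d \<in> ?A1" using x True xd by (simp add: mem_frob_range_iff)
      then show ?thesis using xd by blast
    next
      case False
      have "nat (int t - 1 - x) = t - 1 - d" using False xd by simp
      then have "d \<in> ?A2" using x False xd by (simp add: mem_frob_range_iff)
      then show ?thesis using xd by blast
    qed
  next
    case False
    define e where "e = nat (-1 - x)"
    have xe: "x = -1 - int e" using False e_def by simp
    moreover have "nat (int t - 1 - x) = e + t" using xe by simp
    ultimately have "e \<in> ?A3" using x False e_def by (simp add: mem_frob_range_iff)
    then show ?thesis using xe by blast
  qed
qed

lemma frob_range_pairs_eq:
  "{x \<in> frob_range D. int t - 1 - x \<in> frob_range D}
    = int ` {d \<in> D. t \<le> d \<and> d - t \<notin> D} \<union> int ` {d \<in> D. d < t \<and> t - 1 - d \<in> D}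
      \<union> (\<lambda>e. -1 - int e) ` {e. e \<notin> D \<and> e + t \<in> D}"
  (is "_ = int ` ?A1 \<union> int ` ?A2 \<union> _ ` ?A3")
proof (rule subset_antisym[OF frob_range_pairs_subset], rule subsetI)
  fix x assume "x \<in> int ` ?A1 \<union> int ` ?A2 \<union> (\<lambda>e. -1 - int e) ` ?A3"
  then consider (a) d where "d \<in> ?A1" "x = int d" | (b) d where "d \<in> ?A2" "x = int d"
    | (c) e where "e \<in> ?A3" "x = -1 - int e" by blast
  then show "x \<in> {x \<in> frob_range D. int t - 1 - x \<in> frob_range D}"
  proof cases
    case a
    then have "nat (-1 - (int t - 1 - x)) = d - t" by simp
    with a show ?thesis by (simp add: mem_frob_range_iff)
  next
    case b
    then have "nat (int t - 1 - x) = t - 1 - d" by simp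
    with b show ?thesis by (simp add: mem_frob_range_iff)
  next
    case c
    then have "nat (int t - 1 - x) = e + t" "nat (-1 - x) = e" by simp_all
    with c show ?thesis by (simp add: mem_frob_range_iff)
  qed
qed

lemma card_frob_range_pairs:
  assumes fin: "finite D"
  shows "card {x \<in> frob_range D. int t - 1 - x \<in> frob_range D} = 2 * slides_down t D + complement_pairs t D"
proof -
  define A1 where "A1 = {d \<in> D. t \<le> d \<and> d - t \<notin> D}"
  define A2 where "A2 = {d \<in> D. d < t \<and> t - 1 - d \<in> D}"
  define A3 where "A3 = {e. e \<notin> D \<and> e + t \<in> D}"
  have A3_eq: "A3 = (\<lambda>d. d - t) ` A1"
  proof (intro set_eqI iffI)
    fix e assume "e \<in> A3"
    then show "e \<in> (\<lambda>d. d - t) ` A1"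
      unfolding A3_def A1_def by (intro image_eqI[of _ _ "e + t"]) auto
  qed (auto simp: A3_def A1_def)
  have "inj_on (\<lambda>d. d - t) A1" unfolding A1_def by (auto simp: inj_on_def)
  then have "card A3 = card A1" unfolding A3_eq by (rule card_image)
  have fin: "finite A1" "finite A2" "finite A3"
    unfolding A3_eq A1_def A2_def using fin by auto
  have "card (int ` A1 \<union> int ` A2) = card A1 + card A2"
    using fin by (subst card_Un_disjoint) (auto simp: A1_def A2_def card_image)
  moreover have "card (int ` A1 \<union> int ` A2 \<union> (\<lambda>e. -1 - int e) ` A3)
      = card (int ` A1 \<union> int ` A2) + card ((\<lambda>e. -1 - int e) ` A3)"
    using fin by (intro card_Un_disjoint) auto
  moreover have "card ((\<lambda>e. -1 - int e) ` A3) = card A3"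
    by (intro card_image) (simp add: inj_on_def)
  ultimately have "card (int ` A1 \<union> int ` A2 \<union> (\<lambda>e. -1 - int e) ` A3) = 2 * card A1 + card A2"
    using \<open>card A3 = card A1\<close> by simp
  then show ?thesis
    unfolding frob_range_pairs_eq slides_down_def complement_pairs_def A1_def A2_def A3_def .
qed

lemma n_hook_eq_counts:
  assumes "is_partition lam" "self_conj lam" "0 < t" "finite (frob_set lam)"
  shows "n_hook t lam = 2 * slides_down t (frob_set lam) + complement_pairs t (frob_set lam)"
  using n_hook_eq_card_frob[OF assms(1-3)] card_frob_range_pairs[OF assms(4)]
  unfolding range_frob_eq[OF assms(1,2)] by simp

section \<open>Counting identities for sets of Frobenius coordinates\<close>

definition slides_up :: "nat \<Rightarrow> nat set \<Rightarrow> nat" where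
  "slides_up t D = card {d \<in> D. d + t \<notin> D}"

definition lower_complement_pairs :: "nat \<Rightarrow> nat set \<Rightarrow> nat" where
  "lower_complement_pairs t D = card {d \<in> D. d < (t - 1) div 2 \<and> t - 1 - d \<in> D}"

definition lower_complement_gaps :: "nat \<Rightarrow> nat set \<Rightarrow> nat" where
  "lower_complement_gaps t D = card {d. d < (t - 1) div 2 \<and> d \<notin> D \<and> t - 1 - d \<notin> D}"

lemma sum_lessThan_odd_split:
  fixes f :: "nat \<Rightarrow> 'a::comm_monoid_add"
  shows "(\<Sum>d<2 * c + 1. f d) = (\<Sum>d<c. f d) + f c + (\<Sum>d<c. f (2 * c - d))"
proof -
  have "{..<2 * c + 1} = {..<Suc c} \<union> {Suc c..<2 * c + 1}" by auto
  then have "(\<Sum>d<2 * c + 1. f d) = (\<Sum>d\<in>{..<Suc c} \<union> {Suc c..<2 * c + 1}. f d)"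
    by (simp only:)
  also have "\<dots> = (\<Sum>d<Suc c. f d) + (\<Sum>d = Suc c..<2 * c + 1. f d)"
    by (rule sum.union_disjoint) auto
  also have "(\<Sum>d = Suc c..<2 * c + 1. f d) = (\<Sum>d<c. f (2 * c - d))"
    by (rule sum.reindex_bij_witness[where i = "\<lambda>d. 2 * c - d" and j = "\<lambda>d. 2 * c - d"]) auto
  finally show ?thesis by (simp add: add.commute)
qed

lemma card_lessThan_eq_sum: "card {d. d < (n::nat) \<and> P d} = (\<Sum>d<n. of_bool (P d))"
proof -
  have "{d. d < n \<and> P d} = {..<n} \<inter> {d. P d}" by auto
  then show ?thesis by simp
qed

lemma card_lessThan_odd_split:
  fixes c :: nat
  shows "card {d. d < 2 * c + 1 \<and> P d}
     = card {d. d < c \<and> P d} + of_bool (P c) + card {d. d < c \<and> P (2 * c - d)}"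
  unfolding card_lessThan_eq_sum by (rule sum_lessThan_odd_split)

lemma card_eq_card_filter_add: "finite A \<Longrightarrow> card A = card {x \<in> A. P x} + card {x \<in> A. \<not> P x}"
  using card_Int_Diff[of A "{x. P x}"] by (simp add: set_diff_eq Int_def)

lemma complement_pairs_odd:
  assumes "odd t"
  shows "complement_pairs t D = of_bool ((t - 1) div 2 \<in> D) + 2 * lower_complement_pairs t D"
proof -
  obtain c where t: "t = 2 * c + 1" using assms oddE by blast
  have "complement_pairs t D = card {d. d < 2 * c + 1 \<and> (d \<in> D \<and> 2 * c - d \<in> D)}"
    unfolding complement_pairs_def t by (rule arg_cong[where f = card]) auto
  also have "\<dots> = card {d. d < c \<and> (d \<in> D \<and> 2 * c - d \<in> D)} + of_bool (c \<in> D)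
      + card {d. d < c \<and> (2 * c - d \<in> D \<and> 2 * c - (2 * c - d) \<in> D)}"
    by (simp only: card_lessThan_odd_split) simp
  also have "{d. d < c \<and> (2 * c - d \<in> D \<and> 2 * c - (2 * c - d) \<in> D)}
      = {d \<in> D. d < (t - 1) div 2 \<and> t - 1 - d \<in> D}"
    using t by auto
  also have "{d. d < c \<and> (d \<in> D \<and> 2 * c - d \<in> D)} = {d \<in> D. d < (t - 1) div 2 \<and> t - 1 - d \<in> D}"
    using t by auto
  finally show ?thesis
    unfolding lower_complement_pairs_def using t by simp
qed

lemma slides_up_eq:
  assumes fin: "finite D"
  shows "slides_up t D = slides_down t D + card {d \<in> D. d < t}"
proof -
  have "card D = card {d \<in> D. d + t \<in> D} + slides_up t D"
    unfolding slides_up_def by (rule card_eq_card_filter_add[OF fin])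
  moreover have "card D = card {d \<in> D. d < t} + card {d \<in> D. t \<le> d \<and> d - t \<in> D} + slides_down t D"
  proof -
    have "card {d \<in> D. \<not> d < t} = card {d \<in> D. t \<le> d \<and> d - t \<in> D} + slides_down t D"
      using card_eq_card_filter_add[of "{d \<in> D. \<not> d < t}" "\<lambda>d. d - t \<in> D"] fin
      unfolding slides_down_def by (simp add: not_less)
    then show ?thesis using card_eq_card_filter_add[OF fin, of "\<lambda>d. d < t"] by simp
  qed
  moreover have "card {d \<in> D. t \<le> d \<and> d - t \<in> D} = card {d \<in> D. d + t \<in> D}"
  proof -
    have "{d \<in> D. t \<le> d \<and> d - t \<in> D} = (\<lambda>d. d + t) ` {d \<in> D. d + t \<in> D}"
    proof (intro set_eqI iffI)
      fix x assume "x \<in> {d \<in> D. t \<le> d \<and> d - t \<in> D}"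
      then show "x \<in> (\<lambda>d. d + t) ` {d \<in> D. d + t \<in> D}" by (intro image_eqI[of _ _ "x - t"]) auto
    qed auto
    then show ?thesis by (simp add: card_image)
  qed
  ultimately show ?thesis by simp
qed

lemma slides_up_add_lower_complement_gaps:
  assumes "odd t" "finite D"
  shows "slides_up t D + lower_complement_gaps t D
    = slides_down t D + lower_complement_pairs t D + (t - 1) div 2 + of_bool ((t - 1) div 2 \<in> D)"
proof -
  obtain c where t: "t = 2 * c + 1" using assms oddE by blast
  have "card {d \<in> D. d < t} = card {d. d < 2 * c + 1 \<and> d \<in> D}"
    by (rule arg_cong[where f = card]) (auto simp: t)
  also have "\<dots> = card {d. d < c \<and> d \<in> D} + of_bool (c \<in> D) + card {d. d < c \<and> 2 * c - d \<in> D}"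
    by (rule card_lessThan_odd_split)
  finally have below_t: "card {d \<in> D. d < t}
      = card {d. d < c \<and> d \<in> D} + of_bool (c \<in> D) + card {d. d < c \<and> 2 * c - d \<in> D}" .
  have "lower_complement_gaps t D + card {d. d < c \<and> d \<in> D} + card {d. d < c \<and> 2 * c - d \<in> D}
      = (\<Sum>d<c. of_bool (d \<notin> D \<and> 2 * c - d \<notin> D) + of_bool (d \<in> D) + of_bool (2 * c - d \<in> D))"
    unfolding lower_complement_gaps_def t card_lessThan_eq_sum by (simp add: sum.distrib)
  also have "\<dots> = (\<Sum>d<c. 1 + of_bool (d \<in> D \<and> 2 * c - d \<in> D))"
    by (rule sum.cong) auto
  also have "\<dots> = c + (\<Sum>d<c. of_bool (d \<in> D \<and> 2 * c - d \<in> D))"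
    by (simp only: sum.distrib) simp
  also have "(\<Sum>d<c. of_bool (d \<in> D \<and> 2 * c - d \<in> D)) = lower_complement_pairs t D"
    unfolding lower_complement_pairs_def t card_lessThan_eq_sum[symmetric]
    by (rule arg_cong[where f = card]) auto
  finally show ?thesis
    using slides_up_eq[OF assms(2), of t] below_t t by simp
qed

section \<open>Weights and the sliding bijections\<close>

definition frob_weight :: "nat set \<Rightarrow> nat" where
  "frob_weight D = (\<Sum>d\<in>D. 2 * d + 1)"

definition frob_sets :: "nat \<Rightarrow> nat set set" where
  "frob_sets n = {D. finite D \<and> frob_weight D = n}"

lemma frob_weight_insert:
  "finite D \<Longrightarrow> d \<notin> D \<Longrightarrow> frob_weight (insert d D) = frob_weight D + (2 * d + 1)"
  by (simp add: frob_weight_def)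

lemma frob_weight_remove:
  "finite D \<Longrightarrow> d \<in> D \<Longrightarrow> frob_weight D = frob_weight (D - {d}) + (2 * d + 1)"
  unfolding frob_weight_def by (simp add: sum.remove)

lemma frob_weight_ge: "finite D \<Longrightarrow> d \<in> D \<Longrightarrow> 2 * d + 1 \<le> frob_weight D"
  using frob_weight_remove by fastforce

lemma finite_frob_sets: "finite (frob_sets n)"
proof (rule finite_subset)
  show "frob_sets n \<subseteq> Pow {..<n}"
    using frob_weight_ge by (fastforce simp: frob_sets_def)
qed simp

lemma card_frob_sets_with_centre:
  assumes t: "t = 2 * c + 1" and n: "t \<le> n"
  shows "card {D \<in> frob_sets n. c \<in> D} = card {D \<in> frob_sets (n - t). c \<notin> D}"
proof (rule bij_betw_same_card[of "\<lambda>D. D - {c}"], rule bij_betw_byWitness[where f' = "insert c"])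
  show "(\<lambda>D. D - {c}) ` {D \<in> frob_sets n. c \<in> D} \<subseteq> {D \<in> frob_sets (n - t). c \<notin> D}"
    using frob_weight_remove[of _ c] t by (fastforce simp: frob_sets_def)
  show "insert c ` {D \<in> frob_sets (n - t). c \<notin> D} \<subseteq> {D \<in> frob_sets n. c \<in> D}"
    using frob_weight_insert[of _ c] t n by (fastforce simp: frob_sets_def)
qed auto

lemma frob_sets_with_centre_empty:
  "t = 2 * c + 1 \<Longrightarrow> n < t \<Longrightarrow> {D \<in> frob_sets n. c \<in> D} = {}"
  using frob_weight_ge by (fastforce simp: frob_sets_def)

lemma frob_weight_move:
  assumes "finite D" "d \<in> D" "e \<notin> D"
  shows "frob_weight (insert e (D - {d})) + 2 * d = frob_weight D + 2 * e"
  using assms frob_weight_remove[of D d] frob_weight_insert[of "D - {d}" e] by auto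

lemma frob_weight_insert_pair:
  assumes "finite D" "d \<notin> D" "e \<notin> D" "d \<noteq> e"
  shows "frob_weight (insert d (insert e D)) = frob_weight D + (2 * d + 1) + (2 * e + 1)"
  using assms frob_weight_insert[of D e] frob_weight_insert[of "insert e D" d] by simp

lemma sum_card_eq_of_bij_betw_Sigma:
  assumes "finite I" "finite J" "\<forall>i\<in>I. finite (A i)" "\<forall>j\<in>J. finite (B j)"
    and "bij_betw f (SIGMA i:I. A i) (SIGMA j:J. B j)"
  shows "(\<Sum>i\<in>I. card (A i)) = (\<Sum>j\<in>J. card (B j))"
  using assms bij_betw_same_card card_SigmaI by metis

lemma sum_slides_down_eq:
  assumes t: "0 < t" and n: "2 * t \<le> n"
  shows "(\<Sum>D\<in>frob_sets n. slides_down t D) = (\<Sum>D\<in>frob_sets (n - 2 * t). slides_up t D)"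
  unfolding slides_down_def slides_up_def
proof (rule sum_card_eq_of_bij_betw_Sigma[OF finite_frob_sets finite_frob_sets])
  let ?A = "SIGMA D:frob_sets n. {d \<in> D. t \<le> d \<and> d - t \<notin> D}"
  let ?B = "SIGMA D:frob_sets (n - 2 * t). {d \<in> D. d + t \<notin> D}"
  let ?down = "\<lambda>(D, d). (insert (d - t) (D - {d}), d - t)"
  let ?up = "\<lambda>(D, e). (insert (e + t) (D - {e}), e + t)"
  show "bij_betw ?down ?A ?B"
  proof (rule bij_betw_byWitness[where f' = ?up])
    show "?down ` ?A \<subseteq> ?B"
    proof (rule image_subsetI)
      fix x assume "x \<in> ?A"
      then obtain D d where x: "x = (D, d)" "D \<in> frob_sets n" "d \<in> D" "t \<le> d" "d - t \<notin> D" by auto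
      with frob_weight_move[of D d "d - t"] t show "?down x \<in> ?B" by (auto simp: frob_sets_def)
    qed
    show "?up ` ?B \<subseteq> ?A"
    proof (rule image_subsetI)
      fix x assume "x \<in> ?B"
      then obtain D e where x: "x = (D, e)" "D \<in> frob_sets (n - 2 * t)" "e \<in> D" "e + t \<notin> D" by auto
      with frob_weight_move[of D e "e + t"] t n show "?up x \<in> ?A" by (auto simp: frob_sets_def)
    qed
  qed (use t in auto)
qed (auto simp: frob_sets_def)

lemma sum_lower_complement_pairs_eq:
  assumes t: "t = 2 * c + 1" and n: "2 * t \<le> n"
  shows "(\<Sum>D\<in>frob_sets n. lower_complement_pairs t D)
       = (\<Sum>D\<in>frob_sets (n - 2 * t). lower_complement_gaps t D)"
proof -
  have "(t - 1) div 2 = c" "t - 1 = 2 * c" using t by simp_all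
  then have "(\<Sum>D\<in>frob_sets n. card {d \<in> D. d < c \<and> 2 * c - d \<in> D})
      = (\<Sum>D\<in>frob_sets (n - 2 * t). card {d. d < c \<and> d \<notin> D \<and> 2 * c - d \<notin> D})"
  proof (intro sum_card_eq_of_bij_betw_Sigma[OF finite_frob_sets finite_frob_sets])
    let ?A = "SIGMA D:frob_sets n. {d \<in> D. d < c \<and> 2 * c - d \<in> D}"
    let ?B = "SIGMA D:frob_sets (n - 2 * t). {d. d < c \<and> d \<notin> D \<and> 2 * c - d \<notin> D}"
    let ?remove = "\<lambda>(D, d). (D - {d, 2 * c - d}, d)"
    let ?insert = "\<lambda>(D, e). (insert e (insert (2 * c - e) D), e)"
    show "bij_betw ?remove ?A ?B"
    proof (rule bij_betw_byWitness[where f' = ?insert])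
      show "?remove ` ?A \<subseteq> ?B"
      proof (rule image_subsetI)
        fix x assume "x \<in> ?A"
        then obtain D d where x: "x = (D, d)" "D \<in> frob_sets n" "d \<in> D" "d < c" "2 * c - d \<in> D" by auto
        then have "D = insert d (insert (2 * c - d) (D - {d, 2 * c - d}))" by auto
        with x frob_weight_insert_pair[of "D - {d, 2 * c - d}" d "2 * c - d"] t
        show "?remove x \<in> ?B" by (auto simp: frob_sets_def)
      qed
      show "?insert ` ?B \<subseteq> ?A"
      proof (rule image_subsetI)
        fix x assume "x \<in> ?B"
        then obtain D e where x: "x = (D, e)" "D \<in> frob_sets (n - 2 * t)" "e < c" "e \<notin> D" "2 * c - e \<notin> D"
          by auto
        with frob_weight_insert_pair[of D e "2 * c - e"] t n show "?insert x \<in> ?A" by (auto simp: frob_sets_def)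
      qed
    qed auto
  qed (auto simp: frob_sets_def)
  with \<open>(t - 1) div 2 = c\<close> \<open>t - 1 = 2 * c\<close> show ?thesis
    by (simp add: lower_complement_pairs_def lower_complement_gaps_def)
qed

lemma slides_down_small:
  assumes "n < 2 * t" "D \<in> frob_sets n"
  shows "slides_down t D = 0"
  using assms frob_weight_ge by (fastforce simp: slides_down_def frob_sets_def)

lemma lower_complement_pairs_small:
  assumes t: "t = 2 * c + 1" and "n < 2 * t" "D \<in> frob_sets n"
  shows "lower_complement_pairs t D = 0"
proof -
  have "\<not> (d \<in> D \<and> d < c \<and> 2 * c - d \<in> D)" for d
  proof
    assume d: "d \<in> D \<and> d < c \<and> 2 * c - d \<in> D"
    with assms have "frob_weight D = frob_weight (D - {d}) + (2 * d + 1)"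
      "2 * (2 * c - d) + 1 \<le> frob_weight (D - {d})"
      using frob_weight_remove[of D d] frob_weight_ge[of "D - {d}" "2 * c - d"] by (auto simp: frob_sets_def)
    then have "2 * t \<le> frob_weight D" using d t by linarith
    with assms show False by (simp add: frob_sets_def)
  qed
  then show ?thesis using t by (simp add: lower_complement_pairs_def)
qed

section \<open>Self-conjugate partitions from Frobenius coordinates\<close>

text \<open>\<open>nest_hooks (d # ds)\<close> wraps a hook with arm and leg \<open>d\<close> around \<open>nest_hooks ds\<close>; for a
  strictly decreasing list this is the self-conjugate partition with Frobenius coordinates \<open>d # ds\<close>.\<close>
primrec nest_hooks :: "nat list \<Rightarrow> nat list" where
  "nest_hooks [] = []"
| "nest_hooks (d # ds) = Suc d # map Suc (nest_hooks ds) @ replicate (d - length (nest_hooks ds)) 1"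

lemma length_nest_hooks_Cons:
  "sorted_wrt (>) (d # ds) \<Longrightarrow> length (nest_hooks (d # ds)) = Suc d"
proof (induction ds arbitrary: d)
  case (Cons d' ds)
  then have "length (nest_hooks (d' # ds)) = Suc d'" "d' < d" by simp_all
  then show ?case by simp
qed simp

lemma length_nest_hooks_le:
  assumes "sorted_wrt (>) (d # ds)"
  shows "length (nest_hooks ds) \<le> d"
proof (cases ds)
  case (Cons d' ds')
  with assms have "length (nest_hooks ds) = Suc d'" "d' < d"
    using length_nest_hooks_Cons[of d' ds'] by auto
  then show ?thesis by simp
qed simp

lemma nest_hooks_self_conj:
  "sorted_wrt (>) ds \<Longrightarrow> is_partition (nest_hooks ds) \<and> self_conj (nest_hooks ds)"
proof (induction ds)
  case Nil
  then show ?case by (simp add: is_partition_def self_conj_def conj_part_def)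
next
  case (Cons d ds)
  define mu where "mu = nest_hooks ds"
  define lam where "lam = nest_hooks (d # ds)"
  have IH: "is_partition mu" "self_conj mu" using Cons mu_def by simp_all
  have mu_le: "length mu \<le> d" using length_nest_hooks_le[OF Cons.prems] mu_def by simp
  have lam: "lam = Suc d # map Suc mu @ replicate (d - length mu) 1" by (simp add: lam_def mu_def)
  have len: "length lam = Suc d" using length_nest_hooks_Cons[OF Cons.prems] lam_def by simp
  have "\<forall>x\<in>set mu. x \<le> d" using le_row_0[OF IH(1)] self_conj_length[OF IH] mu_le by fastforce
  moreover have "sorted_wrt (\<ge>) (replicate m (1::nat))" for m by (induction m) auto
  ultimately have P: "is_partition lam"
    using IH(1) unfolding is_partition_def lam by (auto simp: sorted_wrt_append sorted_wrt_map)
  have fm: "foldr max lam 0 = Suc d" using foldr_max_eq_row_0[OF P] by (simp add: lam row_def)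
  have "conj_part lam = lam"
  proof (rule nth_equalityI)
    show "length (conj_part lam) = length lam" using fm len by (simp add: conj_part_def del: upt_Suc)
  next
    fix c assume "c < length (conj_part lam)"
    then have c: "c < Suc d" using fm by (simp add: conj_part_def del: upt_Suc)
    then have "conj_part lam ! c = col lam c" using conj_part_nth fm by simp
    also have "\<dots> = lam ! c"
    proof (cases c)
      case 0
      have "filter (\<lambda>x. Suc 0 \<le> x) lam = lam" using P
        by (auto simp: is_partition_def Suc_le_eq intro: filter_True)
      then show ?thesis using 0 len by (simp add: col_def lam)
    next
      case (Suc c')
      have "filter (\<lambda>x. Suc (Suc c') \<le> x) (replicate m (1::nat)) = []" for m by (induction m) auto
      then have "col lam c = Suc (col mu c')"
        using c Suc by (simp add: col_def lam filter_map o_def)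
      also have "\<dots> = Suc (row mu c')" using self_conj_col[OF IH] by simp
      also have "\<dots> = lam ! c"
        using c Suc mu_le by (auto simp: lam row_def nth_append)
      finally show ?thesis .
    qed
    finally show "conj_part lam ! c = lam ! c" .
  qed
  then show ?case using P lam_def by (simp add: self_conj_def)
qed

lemma sum_list_nest_hooks:
  "sorted_wrt (>) ds \<Longrightarrow> sum_list (nest_hooks ds) = sum_list (map (\<lambda>d. 2 * d + 1) ds)"
proof (induction ds)
  case (Cons d ds)
  have "sum_list (map Suc xs) = sum_list xs + length xs" for xs :: "nat list"
    by (induction xs) auto
  with Cons length_nest_hooks_le[OF Cons.prems] show ?case by (simp add: sum_list_replicate)
qed simp

lemma frob_nest_hooks_Cons:
  shows "frob (nest_hooks (d # ds)) 0 = int d"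
    and "r < length (nest_hooks ds) \<Longrightarrow> frob (nest_hooks (d # ds)) (Suc r) = frob (nest_hooks ds) r"
    and "length (nest_hooks ds) \<le> r \<Longrightarrow> frob (nest_hooks (d # ds)) (Suc r) < 0"
  by (auto simp: frob_def row_def nth_append)

lemma frob_set_nest_hooks: "frob_set (nest_hooks ds) = set ds"
proof (induction ds)
  case Nil
  have "int n \<noteq> frob [] r" for n r using frob_negative[of "[]" r] by simp
  then show ?case by (auto simp: frob_set_def)
next
  case (Cons d ds)
  show ?case
  proof (intro set_eqI iffI)
    fix n assume "n \<in> frob_set (nest_hooks (d # ds))"
    then obtain r where r: "int n = frob (nest_hooks (d # ds)) r" unfolding frob_set_def by auto
    show "n \<in> set (d # ds)"
    proof (cases r)
      case 0
      then show ?thesis using r frob_nest_hooks_Cons(1) by simp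
    next
      case (Suc r')
      then have "r' < length (nest_hooks ds)"
        using r frob_nest_hooks_Cons(3)[of ds r' d] by (metis of_nat_less_0_iff not_le)
      then have "n \<in> frob_set (nest_hooks ds)"
        using r Suc frob_nest_hooks_Cons(2) by (simp add: frob_set_def)
      then show ?thesis using Cons.IH by simp
    qed
  next
    fix n assume n: "n \<in> set (d # ds)"
    show "n \<in> frob_set (nest_hooks (d # ds))"
    proof (cases "n = d")
      case True
      then show ?thesis using frob_nest_hooks_Cons(1)[of d ds] by (metis frob_set_def mem_Collect_eq rangeI)
    next
      case False
      then have "n \<in> frob_set (nest_hooks ds)" using n Cons.IH by simp
      then obtain r where r: "int n = frob (nest_hooks ds) r" unfolding frob_set_def by auto
      then have "r < length (nest_hooks ds)"
        using frob_negative[of "nest_hooks ds" r] by (metis of_nat_less_0_iff not_le)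
      then have "int n = frob (nest_hooks (d # ds)) (Suc r)" using r frob_nest_hooks_Cons(2) by simp
      then show ?thesis unfolding frob_set_def by (metis mem_Collect_eq rangeI)
    qed
  qed
qed

lemma strict_antimono_eq_of_range_eq:
  fixes f g :: "nat \<Rightarrow> 'a::linorder"
  assumes f: "\<And>r s. r < s \<Longrightarrow> f s < f r" and g: "\<And>r s. r < s \<Longrightarrow> g s < g r"
    and range_eq: "range f = range g"
  shows "f = g"
proof
  fix r show "f r = g r"
  proof (induction r rule: less_induct)
    case (less r)
    obtain s where s: "f r = g s" using range_eq by (metis rangeE rangeI)
    obtain s' where s': "g r = f s'" using range_eq by (metis rangeE rangeI)
    consider "s < r" | "r < s" | "s = r" by linarith
    then show ?case
    proof cases
      case 1
      with s less.IH have "f r = f s" by simp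
      with f[OF 1] show ?thesis by simp
    next
      case 2
      with s s' g[OF 2] have "f r < f s'" by simp
      then have "s' < r" using f by (metis not_less_iff_gr_or_eq)
      with s' less.IH have "g r = g s'" by simp
      with g[OF \<open>s' < r\<close>] show ?thesis by simp
    qed (use s in simp)
  qed
qed

lemma self_conj_eq_of_frob_set_eq:
  assumes "is_partition lam" "self_conj lam" "is_partition mu" "self_conj mu"
    and "frob_set lam = frob_set mu"
  shows "lam = mu"
proof -
  have "frob lam = frob mu"
    using assms range_frob_eq[of lam] range_frob_eq[of mu]
    by (intro strict_antimono_eq_of_range_eq) (simp_all add: frob_strict_antimono)
  then have "frob lam r = frob mu r" for r by simp
  then have rows: "row lam r = row mu r" for r by (simp add: frob_def)
  then have len: "length lam = length mu"
    using self_conj_length[OF assms(1,2)] self_conj_length[OF assms(3,4)] by simp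
  show ?thesis
  proof (rule nth_equalityI)
    fix i assume "i < length lam"
    with rows[of i] len show "lam ! i = mu ! i" by (simp add: row_def)
  qed (fact len)
qed

lemma finite_frob_set:
  assumes "is_partition lam" "self_conj lam"
  shows "finite (frob_set lam)"
proof (rule finite_subset)
  show "frob_set lam \<subseteq> {..<length lam}"
  proof
    fix d assume "d \<in> frob_set lam"
    then obtain r where "int d = frob lam r" by (auto simp: frob_set_def)
    with frob_bounds(2)[OF assms, of r] show "d \<in> {..<length lam}" by simp
  qed
qed simp

definition frob_partition :: "nat set \<Rightarrow> nat list" where
  "frob_partition D = nest_hooks (rev (sorted_list_of_set D))"

lemma frob_partition:
  assumes "finite D"
  shows "is_partition (frob_partition D)" "self_conj (frob_partition D)"
    and "sum_list (frob_partition D) = frob_weight D" "frob_set (frob_partition D) = D"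
proof -
  have sorted: "sorted_wrt (>) (rev (sorted_list_of_set D))"
    using strict_sorted_list_of_set[of D] by (simp add: sorted_wrt_rev)
  show "is_partition (frob_partition D)" "self_conj (frob_partition D)"
    using nest_hooks_self_conj[OF sorted] by (simp_all add: frob_partition_def)
  show "sum_list (frob_partition D) = frob_weight D"
    unfolding frob_partition_def sum_list_nest_hooks[OF sorted] frob_weight_def
    using assms by (simp add: sum_list_distinct_conv_sum_set)
  show "frob_set (frob_partition D) = D"
    unfolding frob_partition_def frob_set_nest_hooks using assms by simp
qed

lemma bij_betw_frob_partition:
  "bij_betw frob_partition (frob_sets n) {lam. partition_of lam n \<and> self_conj lam}"
proof (rule bij_betw_byWitness[where f' = frob_set])
  have inverse: "frob_partition (frob_set lam) = lam" if "is_partition lam" "self_conj lam" for lam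
    using that frob_partition[OF finite_frob_set[OF that]]
    by (intro self_conj_eq_of_frob_set_eq) simp_all
  then show "\<forall>lam \<in> {lam. partition_of lam n \<and> self_conj lam}. frob_partition (frob_set lam) = lam"
    by (simp add: partition_of_def)
  show "\<forall>D \<in> frob_sets n. frob_set (frob_partition D) = D"
    by (simp add: frob_sets_def frob_partition)
  show "frob_partition ` frob_sets n \<subseteq> {lam. partition_of lam n \<and> self_conj lam}"
    by (auto simp: frob_sets_def partition_of_def frob_partition)
  show "frob_set ` {lam. partition_of lam n \<and> self_conj lam} \<subseteq> frob_sets n"
  proof clarify
    fix lam assume "partition_of lam n" "self_conj lam"
    then have "is_partition lam" "self_conj lam" "sum_list lam = n" by (simp_all add: partition_of_def)
    with inverse frob_partition(3)[OF finite_frob_set] finite_frob_set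
    show "frob_set lam \<in> frob_sets n" by (metis (mono_tags) frob_sets_def mem_Collect_eq)
  qed
qed

lemma a_star_eq_sum_frob_sets:
  assumes "0 < t"
  shows "a_star t n = (\<Sum>D\<in>frob_sets n. 2 * slides_down t D + complement_pairs t D)"
proof -
  have "a_star t n = (\<Sum>D\<in>frob_sets n. n_hook t (frob_partition D))"
    unfolding a_star_def by (rule sum.reindex_bij_betw[OF bij_betw_frob_partition, symmetric])
  also have "\<dots> = (\<Sum>D\<in>frob_sets n. 2 * slides_down t D + complement_pairs t D)"
  proof (rule sum.cong)
    fix D assume "D \<in> frob_sets n"
    then have "finite D" by (simp add: frob_sets_def)
    with n_hook_eq_counts[OF frob_partition(1,2) assms] frob_partition(4)
    show "n_hook t (frob_partition D) = 2 * slides_down t D + complement_pairs t D" by simp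
  qed simp
  finally show ?thesis .
qed

lemma sc_eq_card_frob_sets: "sc m = (if m < 0 then 0 else card (frob_sets (nat m)))"
  using bij_betw_same_card[OF bij_betw_frob_partition] by (simp add: sc_def)

lemma qstar_eq_card_frob_sets: "qstar m = (if m < 0 then 0 else card (frob_sets (nat m)))"
proof -
  let ?odd_sets = "{S :: nat set. finite S \<and> (\<forall>x\<in>S. odd x) \<and> \<Sum>S = nat m}"
  let ?f = "\<lambda>d::nat. 2 * d + 1"
  have inj: "inj ?f" by (auto simp: inj_def)
  have "bij_betw (\<lambda>D. ?f ` D) (frob_sets (nat m)) ?odd_sets"
  proof (rule bij_betw_byWitness[where f' = "\<lambda>S. ?f -` S"])
    have image_vimage: "?f ` (?f -` S) = S" if "\<forall>x\<in>S. odd x" for S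
      using that by (auto simp: image_iff elim!: oddE)
    show "\<forall>D\<in>frob_sets (nat m). ?f -` ?f ` D = D" using inj by (simp add: inj_vimage_image_eq)
    show "\<forall>S\<in>?odd_sets. ?f ` (?f -` S) = S" using image_vimage by blast
    have "\<Sum>(?f ` D) = frob_weight D" for D
      using inj by (simp add: frob_weight_def sum.reindex inj_on_subset)
    then show "(\<lambda>D. ?f ` D) ` frob_sets (nat m) \<subseteq> ?odd_sets"
      by (auto simp: frob_sets_def)
    show "(\<lambda>S. ?f -` S) ` ?odd_sets \<subseteq> frob_sets (nat m)"
    proof clarify
      fix S assume S: "finite S" "\<forall>x\<in>S. odd x" "\<Sum>S = nat m"
      have "finite (?f -` S)" using finite_vimageI[OF S(1) inj] .
      moreover have "frob_weight (?f -` S) = \<Sum>S"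
        using \<open>\<Sum>(?f ` (?f -` S)) = frob_weight (?f -` S)\<close> image_vimage[OF S(2)] by simp
      ultimately show "?f -` S \<in> frob_sets (nat m)" using S(3) by (simp add: frob_sets_def)
    qed
  qed
  then show ?thesis unfolding qstar_def by (simp add: bij_betw_same_card)
qed

lemma odd_poch_partial_nth:
  assumes "n \<le> N"
  shows "fps_nth (\<Prod>j<N. 1 + fps_X ^ (2 * j + 1) :: real fps) n = real (card (frob_sets n))"
proof -
  have "(\<Prod>j<N. 1 + fps_X ^ (2 * j + 1) :: real fps) = (\<Prod>j<N. fps_X ^ (2 * j + 1) + 1)"
    by (simp add: add.commute)
  also have "\<dots> = (\<Sum>D\<in>Pow {..<N}. (\<Prod>j\<in>D. fps_X ^ (2 * j + 1)) * (\<Prod>j\<in>{..<N} - D. 1))"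
    by (rule prod_add) simp
  also have "\<dots> = (\<Sum>D\<in>Pow {..<N}. fps_X ^ frob_weight D)"
    by (rule sum.cong) (simp_all add: frob_weight_def power_sum)
  finally have expand: "(\<Prod>j<N. 1 + fps_X ^ (2 * j + 1) :: real fps) = (\<Sum>D\<in>Pow {..<N}. fps_X ^ frob_weight D)" .
  have "fps_nth (\<Sum>D\<in>Pow {..<N}. fps_X ^ frob_weight D :: real fps) n
      = (\<Sum>D\<in>Pow {..<N}. of_bool (frob_weight D = n))"
    by (simp add: fps_sum_nth of_bool_def eq_commute)
  also have "\<dots> = real (card (Pow {..<N} \<inter> {D. frob_weight D = n}))" by simp
  moreover have "Pow {..<N} \<inter> {D. frob_weight D = n} = frob_sets n"
  proof (intro set_eqI iffI)
    fix D assume "D \<in> Pow {..<N} \<inter> {D. frob_weight D = n}"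
    then show "D \<in> frob_sets n" by (auto simp: frob_sets_def intro: finite_subset)
  next
    fix D assume D: "D \<in> frob_sets n"
    then have "D \<subseteq> {..<N}" using assms frob_weight_ge[of D] by (fastforce simp: frob_sets_def)
    with D show "D \<in> Pow {..<N} \<inter> {D. frob_weight D = n}" by (simp add: frob_sets_def)
  qed
  ultimately show ?thesis unfolding expand by simp
qed

lemma odd_poch_eq: "odd_poch = Abs_fps (\<lambda>n. real (card (frob_sets n)))"
proof -
  have "(\<lambda>N. \<Prod>j<N. 1 + fps_X ^ (2 * j + 1) :: real fps) \<longlonglongrightarrow> Abs_fps (\<lambda>n. real (card (frob_sets n)))"
  proof (rule tendsto_fpsI)
    fix n
    show "\<forall>\<^sub>F N in sequentially. fps_nth (\<Prod>j<N. 1 + fps_X ^ (2 * j + 1) :: real fps) n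
        = fps_nth (Abs_fps (\<lambda>n. real (card (frob_sets n)))) n"
      by (rule eventually_sequentiallyI[of n]) (unfold fps_nth_Abs_fps, rule odd_poch_partial_nth)
  qed
  then show ?thesis unfolding odd_poch_def by (rule limI)
qed

section \<open>Recurrences and generating functions\<close>

definition centre_count :: "nat \<Rightarrow> nat \<Rightarrow> nat" where
  "centre_count t n = card {D \<in> frob_sets n. (t - 1) div 2 \<in> D}"

definition slide_count :: "nat \<Rightarrow> nat \<Rightarrow> nat" where
  "slide_count t n = (\<Sum>D\<in>frob_sets n. slides_down t D + lower_complement_pairs t D)"

lemma card_frob_sets_with: "card {D \<in> frob_sets n. c \<in> D} = (\<Sum>D\<in>frob_sets n. of_bool (c \<in> D))"
  using finite_frob_sets[of n] by (simp add: Int_def conj_commute)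

lemma centre_count_rec:
  assumes "odd t" "t \<le> n"
  shows "centre_count t n + centre_count t (n - t) = card (frob_sets (n - t))"
proof -
  obtain c where t: "t = 2 * c + 1" using assms(1) oddE by blast
  have "card (frob_sets (n - t)) = centre_count t (n - t) + card {D \<in> frob_sets (n - t). c \<notin> D}"
    unfolding centre_count_def using card_eq_card_filter_add[OF finite_frob_sets] t by simp
  with card_frob_sets_with_centre[OF t assms(2)] t show ?thesis
    by (simp add: centre_count_def)
qed

lemma centre_count_eq_0:
  assumes "odd t" "n < t"
  shows "centre_count t n = 0"
proof -
  obtain c where t: "t = 2 * c + 1" using assms(1) oddE by blast
  then have "(t - 1) div 2 = c" by simp
  then show ?thesis
    using frob_sets_with_centre_empty[OF t assms(2)] by (simp only: centre_count_def card.empty)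
qed

lemma slide_count_rec:
  assumes "odd t" "2 * t \<le> n"
  shows "slide_count t n
    = slide_count t (n - 2 * t) + (t - 1) div 2 * card (frob_sets (n - 2 * t)) + centre_count t (n - 2 * t)"
proof -
  obtain c where t: "t = 2 * c + 1" using assms(1) oddE by blast
  define m where "m = n - 2 * t"
  have "slide_count t n = (\<Sum>D\<in>frob_sets m. slides_up t D + lower_complement_gaps t D)"
    unfolding slide_count_def sum.distrib m_def
    using sum_slides_down_eq[of t n] sum_lower_complement_pairs_eq[OF t assms(2)] t assms(2) by simp
  also have "\<dots> = (\<Sum>D\<in>frob_sets m. (slides_down t D + lower_complement_pairs t D) + c + of_bool (c \<in> D))"
    using slides_up_add_lower_complement_gaps[OF assms(1)] t by (intro sum.cong) (simp_all add: frob_sets_def)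
  also have "\<dots> = slide_count t m + c * card (frob_sets m) + centre_count t m"
    unfolding slide_count_def centre_count_def card_frob_sets_with t by (simp add: sum.distrib)
  finally show ?thesis using t by (simp add: m_def mult.commute)
qed

lemma slide_count_eq_0: "odd t \<Longrightarrow> n < 2 * t \<Longrightarrow> slide_count t n = 0"
  using slides_down_small lower_complement_pairs_small
  by (auto simp: slide_count_def elim!: oddE)

lemma a_star_eq_counts:
  assumes "odd t"
  shows "a_star t n = centre_count t n + 2 * slide_count t n"
proof -
  have "a_star t n = (\<Sum>D\<in>frob_sets n. of_bool ((t - 1) div 2 \<in> D) + 2 * (slides_down t D + lower_complement_pairs t D))"
    using a_star_eq_sum_frob_sets[OF odd_pos[OF assms]] complement_pairs_odd[OF assms]
    by (simp add: algebra_simps)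
  then show ?thesis
    unfolding centre_count_def slide_count_def card_frob_sets_with by (simp add: sum.distrib sum_distrib_left)
qed

definition nat_fps :: "(nat \<Rightarrow> nat) \<Rightarrow> real fps" where
  "nat_fps f = Abs_fps (\<lambda>n. real (f n))"

lemma nat_fps_centre_count:
  assumes "odd t"
  shows "nat_fps (centre_count t) * (1 + fps_X ^ t) = fps_X ^ t * nat_fps (\<lambda>n. card (frob_sets n))"
proof (rule fps_ext)
  fix n
  show "fps_nth (nat_fps (centre_count t) * (1 + fps_X ^ t)) n
      = fps_nth (fps_X ^ t * nat_fps (\<lambda>n. card (frob_sets n))) n"
  proof (cases "n < t")
    case True
    then show ?thesis
      using centre_count_eq_0[OF assms True] by (simp add: algebra_simps fps_X_power_mult_nth nat_fps_def)
  next
    case False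
    then have "real (centre_count t n) + real (centre_count t (n - t)) = real (card (frob_sets (n - t)))"
      using centre_count_rec[OF assms] by (metis not_less of_nat_add)
    with False show ?thesis by (simp add: algebra_simps fps_X_power_mult_nth nat_fps_def)
  qed
qed

lemma nat_fps_slide_count:
  assumes "odd t"
  shows "nat_fps (slide_count t) = fps_X ^ (2 * t) * (nat_fps (slide_count t)
    + of_nat ((t - 1) div 2) * nat_fps (\<lambda>n. card (frob_sets n)) + nat_fps (centre_count t))"
proof (rule fps_ext)
  fix n
  have of_nat_mult_nth: "fps_nth (of_nat k * f) m = of_nat k * fps_nth f m" for k m and f :: "real fps"
    by (simp add: fps_of_nat[symmetric])
  show "fps_nth (nat_fps (slide_count t)) n = fps_nth (fps_X ^ (2 * t) * (nat_fps (slide_count t)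
    + of_nat ((t - 1) div 2) * nat_fps (\<lambda>n. card (frob_sets n)) + nat_fps (centre_count t))) n"
  proof (cases "n < 2 * t")
    case True
    then show ?thesis using slide_count_eq_0[OF assms True] by (simp add: fps_X_power_mult_nth nat_fps_def)
  next
    case False
    then have "real (slide_count t n) = real (slide_count t (n - 2 * t))
        + real ((t - 1) div 2) * real (card (frob_sets (n - 2 * t))) + real (centre_count t (n - 2 * t))"
      using slide_count_rec[OF assms] by (metis not_less of_nat_add of_nat_mult)
    with False show ?thesis by (simp add: fps_X_power_mult_nth nat_fps_def of_nat_mult_nth)
  qed
qed

lemma nat_fps_a_star:
  assumes "odd t"
  shows "nat_fps (a_star t) = nat_fps (centre_count t) + 2 * nat_fps (slide_count t)"
  by (rule fps_ext) (simp add: nat_fps_def a_star_eq_counts[OF assms] fps_numeral_fps_const)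

lemma recurrences_imp_rational:
  fixes G F S u k :: "'a::comm_ring_1"
  assumes G: "G * (1 + u) = u * S" and F: "F = u * u * (F + k * S + G)"
  shows "(G + 2 * F) * ((1 - u * u) * (1 + u)) = S * (u * (1 + (2 * k) * u + (2 * k + 1) * (u * u)))"
proof -
  have F': "F * (1 - u * u) = u * u * (k * S + G)" using F by (simp add: algebra_simps)
  have "(G + 2 * F) * ((1 - u * u) * (1 + u))
      = G * (1 + u) * (1 - u * u) + 2 * (F * (1 - u * u)) * (1 + u)"
    by (simp add: algebra_simps)
  also have "\<dots> = u * S * (1 - u * u) + 2 * (u * u * (k * S + G)) * (1 + u)"
    by (simp only: G F')
  also have "\<dots> = u * S * (1 - u * u) + 2 * u * u * k * S * (1 + u) + 2 * u * u * (G * (1 + u))"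
    by (simp add: algebra_simps)
  also have "\<dots> = S * (u * (1 + (2 * k) * u + (2 * k + 1) * (u * u)))"
    by (simp only: G) (simp add: algebra_simps)
  finally show ?thesis .
qed

lemma nat_fps_a_star_mult:
  assumes "odd t"
  shows "nat_fps (a_star t) * ((1 - fps_X ^ (2 * t)) * (1 + fps_X ^ t))
    = nat_fps (\<lambda>n. card (frob_sets n))
      * (fps_X ^ t * (1 + of_nat (t - 1) * fps_X ^ t + of_nat t * fps_X ^ (2 * t)))"
proof -
  obtain c where t: "t = 2 * c + 1" using assms oddE by blast
  have X2: "(fps_X ^ (2 * t) :: real fps) = fps_X ^ t * fps_X ^ t" by (simp add: mult_2 power_add)
  have "(t - 1) div 2 = c" "(of_nat (t - 1) :: real fps) = 2 * of_nat c" "(of_nat t :: real fps) = 2 * of_nat c + 1"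
    using t by simp_all
  with nat_fps_slide_count[OF assms] have "nat_fps (slide_count t) = fps_X ^ t * fps_X ^ t
      * (nat_fps (slide_count t) + of_nat c * nat_fps (\<lambda>n. card (frob_sets n)) + nat_fps (centre_count t))"
    unfolding X2 by simp
  from recurrences_imp_rational[OF nat_fps_centre_count[OF assms] this]
  show ?thesis unfolding nat_fps_a_star[OF assms] X2 \<open>of_nat (t - 1) = _\<close> \<open>of_nat t = _\<close> .
qed

section \<open>Partial fractions and coefficient extraction\<close>

lemma fps_compose_X_power_nth:
  assumes "0 < k"
  shows "fps_nth (a oo fps_X ^ k) n = (if k dvd n then fps_nth a (n div k) else 0)"
proof -
  have "fps_nth (a oo fps_X ^ k) n = (\<Sum>i=0..n. if i = n div k \<and> k dvd n then fps_nth a i else 0)"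
    unfolding fps_compose_nth power_mult[symmetric] fps_X_power_nth
    using assms by (intro sum.cong) auto
  also have "\<dots> = (if k dvd n then fps_nth a (n div k) else 0)"
    by simp
  finally show ?thesis .
qed

lemma fps_compose_X_power_mult_nth:
  fixes a s :: "'a::comm_ring_1 fps"
  assumes k: "0 < k" and a0: "fps_nth a 0 = 0"
  shows "fps_nth ((a oo fps_X ^ k) * s) n
    = (\<Sum>j\<in>{1..n}. fps_nth a j * (if k * j \<le> n then fps_nth s (n - k * j) else 0))"
proof -
  have "fps_nth ((a oo fps_X ^ k) * s) n
      = (\<Sum>i\<in>{i \<in> {0..n}. k dvd i}. fps_nth a (i div k) * fps_nth s (n - i))"
    unfolding fps_mult_nth fps_compose_X_power_nth[OF k] sum.inter_filter[OF finite_atLeastAtMost]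
    by (intro sum.cong) auto
  also have "{i \<in> {0..n}. k dvd i} = (\<lambda>j. k * j) ` {j \<in> {0..n}. k * j \<le> n}"
  proof (intro set_eqI iffI)
    fix i assume "i \<in> {i \<in> {0..n}. k dvd i}"
    then obtain j where j: "i = k * j" "k * j \<le> n" by auto
    moreover have "j \<le> k * j" using k by simp
    then have "j \<le> n" using j by linarith
    with j show "i \<in> (\<lambda>j. k * j) ` {j \<in> {0..n}. k * j \<le> n}" by auto
  qed auto
  also have "(\<Sum>i\<in>(\<lambda>j. k * j) ` {j \<in> {0..n}. k * j \<le> n}. fps_nth a (i div k) * fps_nth s (n - i))
      = (\<Sum>j\<in>{j \<in> {0..n}. k * j \<le> n}. fps_nth a j * fps_nth s (n - k * j))"
    using k by (subst sum.reindex) (auto simp: inj_on_def)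
  also have "\<dots> = (\<Sum>j\<in>{0..n}. fps_nth a j * (if k * j \<le> n then fps_nth s (n - k * j) else 0))"
    by (simp add: sum.inter_filter[symmetric] if_distrib[of "(*) _"] cong: if_cong)
  also have "\<dots> = (\<Sum>j\<in>{1..n}. fps_nth a j * (if k * j \<le> n then fps_nth s (n - k * j) else 0))"
    using a0 by (simp add: sum.atLeast_Suc_atMost)
  finally show ?thesis .
qed

definition alt_nat_fps :: "real fps" where
  "alt_nat_fps = Abs_fps (\<lambda>j. (-1) ^ (j - 1) * real j)"

definition geometric_tail_fps :: "real fps" where
  "geometric_tail_fps = Abs_fps (\<lambda>j. if j = 0 then 0 else 1)"

lemma fps_mult_one_plus_X_nth:
  fixes f :: "'a::comm_ring_1 fps"
  shows "fps_nth (f * (1 + fps_X)) j = fps_nth f j + (if j = 0 then 0 else fps_nth f (j - 1))"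
  by (simp add: distrib_left mult.commute[of f])

lemma fps_mult_one_minus_X_nth:
  fixes f :: "'a::comm_ring_1 fps"
  shows "fps_nth (f * (1 - fps_X)) j = fps_nth f j - (if j = 0 then 0 else fps_nth f (j - 1))"
  by (simp add: right_diff_distrib mult.commute[of f])

lemma alt_nat_fps_mult: "alt_nat_fps * (1 + fps_X) ^ 2 = fps_X"
proof -
  define alt_one :: "real fps" where "alt_one = Abs_fps (\<lambda>j. if j = 0 then 0 else (-1) ^ (j - 1))"
  have "alt_nat_fps * (1 + fps_X) = alt_one"
  proof (rule fps_ext)
    fix j show "fps_nth (alt_nat_fps * (1 + fps_X)) j = fps_nth alt_one j"
      unfolding fps_mult_one_plus_X_nth
      by (cases j; cases "j - 1") (auto simp: alt_nat_fps_def alt_one_def algebra_simps)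
  qed
  moreover have "alt_one * (1 + fps_X) = fps_X"
  proof (rule fps_ext)
    fix j show "fps_nth (alt_one * (1 + fps_X)) j = fps_nth fps_X j"
      unfolding fps_mult_one_plus_X_nth
      by (cases j; cases "j - 1") (auto simp: alt_one_def fps_X_def)
  qed
  ultimately show ?thesis by (simp add: power2_eq_square mult.assoc[symmetric])
qed

lemma geometric_tail_fps_mult: "geometric_tail_fps * (1 - fps_X) = fps_X"
proof (rule fps_ext)
  fix j show "fps_nth (geometric_tail_fps * (1 - fps_X)) j = fps_nth fps_X j"
    unfolding fps_mult_one_minus_X_nth
    by (cases j; cases "j - 1") (auto simp: geometric_tail_fps_def fps_X_def)
qed

text \<open>Partial fractions with \<open>u = X^t\<close>:
  \<open>u (1 + (t - 1) u + t u\<^sup>2) / ((1 - u\<^sup>2)(1 + u)) = u / (1 + u)\<^sup>2 + t u\<^sup>2 / (1 - u\<^sup>2)\<close>.\<close>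
definition hook_kernel :: "nat \<Rightarrow> real fps" where
  "hook_kernel t = (alt_nat_fps oo fps_X ^ t) + of_nat t * (geometric_tail_fps oo fps_X ^ (2 * t))"

lemma hook_kernel_mult:
  assumes t: "0 < t"
  shows "hook_kernel t * ((1 - fps_X ^ (2 * t)) * (1 + fps_X ^ t))
    = fps_X ^ t * (1 + of_nat (t - 1) * fps_X ^ t + of_nat t * fps_X ^ (2 * t))"
proof -
  define u :: "real fps" where "u = fps_X ^ t"
  define A where "A = alt_nat_fps oo fps_X ^ t"
  define B where "B = geometric_tail_fps oo fps_X ^ (2 * t)"
  have u0: "fps_nth u 0 = 0" "fps_nth (fps_X ^ (2 * t) :: real fps) 0 = 0"
    using t by (simp_all add: u_def)
  have u2: "(fps_X ^ (2 * t) :: real fps) = u * u" by (simp add: u_def mult_2 power_add)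
  have A: "A * (1 + u) ^ 2 = u"
    using arg_cong[OF alt_nat_fps_mult, of "\<lambda>f. f oo u"] u0 unfolding A_def u_def
    by (simp add: fps_compose_mult_distrib fps_compose_power[symmetric] fps_compose_add_distrib)
  have B: "B * (1 - u * u) = u * u"
    using arg_cong[OF geometric_tail_fps_mult, of "\<lambda>f. f oo fps_X ^ (2 * t)"] u0 unfolding B_def
    by (simp add: fps_compose_mult_distrib fps_compose_sub_distrib u2)
  have "hook_kernel t * ((1 - fps_X ^ (2 * t)) * (1 + fps_X ^ t))
      = A * (1 + u) ^ 2 * (1 - u) + of_nat t * (B * (1 - u * u)) * (1 + u)"
    unfolding hook_kernel_def A_def[symmetric] B_def[symmetric] unfolding u_def[symmetric] u2
    by (simp add: algebra_simps power2_eq_square)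
  also have "\<dots> = u * (1 - u) + of_nat t * (u * u) * (1 + u)"
    by (simp only: A B)
  also have "\<dots> = u * (1 + (of_nat t - 1) * u + of_nat t * (u * u))"
    by (simp add: algebra_simps)
  finally show ?thesis
    using t by (simp add: u_def[symmetric] u2)
qed

lemma nat_fps_a_star_eq:
  assumes "odd t"
  shows "nat_fps (a_star t) = hook_kernel t * nat_fps (\<lambda>n. card (frob_sets n))"
proof -
  have "fps_nth ((1 - fps_X ^ (2 * t)) * (1 + fps_X ^ t) :: real fps) 0 = 1"
    using odd_pos[OF assms] by simp
  then have "(1 - fps_X ^ (2 * t)) * (1 + fps_X ^ t) \<noteq> (0 :: real fps)" by (metis fps_zero_nth zero_neq_one)
  moreover have "nat_fps (a_star t) * ((1 - fps_X ^ (2 * t)) * (1 + fps_X ^ t))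
      = hook_kernel t * nat_fps (\<lambda>n. card (frob_sets n)) * ((1 - fps_X ^ (2 * t)) * (1 + fps_X ^ t))"
    unfolding nat_fps_a_star_mult[OF assms] hook_kernel_mult[OF odd_pos[OF assms], symmetric]
    by (simp add: algebra_simps)
  ultimately show ?thesis by simp
qed

lemma a_star_eq_sum:
  assumes "odd t" and f: "\<And>m. f m = (if m < 0 then 0 else card (frob_sets (nat m)))"
  shows "int (a_star t n) = (\<Sum>j\<in>{1..n}. (-1) ^ (j - 1) * int j * int (f (int n - int t * int j))
                                          + int t * int (f (int n - 2 * int t * int j)))"
proof -
  have t: "0 < t" "0 < 2 * t" using odd_pos[OF assms(1)] by simp_all
  have f_shift: "real (f (int n - int k)) = (if k \<le> n then real (card (frob_sets (n - k))) else 0)" for k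
    using f[of "int n - int k"] by (auto simp: nat_diff_distrib)
  have f_shift1: "real (f (int n - int t * int j))
      = (if t * j \<le> n then real (card (frob_sets (n - t * j))) else 0)" for j
    using f_shift[of "t * j"] by simp
  have f_shift2: "real (f (int n - 2 * int t * int j))
      = (if 2 * t * j \<le> n then real (card (frob_sets (n - 2 * t * j))) else 0)" for j
    using f_shift[of "2 * t * j"] by simp
  have "real (a_star t n) = fps_nth (hook_kernel t * nat_fps (\<lambda>n. card (frob_sets n))) n"
    using arg_cong[OF nat_fps_a_star_eq[OF assms(1)], of "\<lambda>f. fps_nth f n"] by (simp add: nat_fps_def)
  also have "\<dots> = fps_nth ((alt_nat_fps oo fps_X ^ t) * nat_fps (\<lambda>n. card (frob_sets n))) n
      + real t * fps_nth ((geometric_tail_fps oo fps_X ^ (2 * t)) * nat_fps (\<lambda>n. card (frob_sets n))) n"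
    by (simp add: hook_kernel_def distrib_right mult.assoc fps_of_nat[symmetric])
  also have "\<dots> = (\<Sum>j\<in>{1..n}. (-1) ^ (j - 1) * real j * real (f (int n - int (t * j))))
      + real t * (\<Sum>j\<in>{1..n}. real (f (int n - int (2 * t * j))))"
    unfolding nat_fps_def
    by (subst (1 2) fps_compose_X_power_mult_nth)
      (simp_all add: t alt_nat_fps_def geometric_tail_fps_def f_shift1 f_shift2 cong: if_cong)
  also have "\<dots> = (\<Sum>j\<in>{1..n}. (-1) ^ (j - 1) * real j * real (f (int n - int (t * j)))
                                 + real t * real (f (int n - int (2 * t * j))))"
    by (simp add: sum.distrib sum_distrib_left)
  finally have "real_of_int (int (a_star t n)) = real_of_int (\<Sum>j\<in>{1..n}.
      (-1) ^ (j - 1) * int j * int (f (int n - int t * int j)) + int t * int (f (int n - 2 * int t * int j)))"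
    by (simp add: mult.assoc)
  then show ?thesis by (rule of_int_eq_iff[THEN iffD1])
qed

lemma hook_kernel_eq_divide:
  assumes "0 < t"
  shows "fps_X ^ t * (1 + of_nat (t - 1) * fps_X ^ t + of_nat t * fps_X ^ (2 * t))
           / ((1 - fps_X ^ (2 * t)) * (1 + fps_X ^ t)) = hook_kernel t"
proof -
  define D :: "real fps" where "D = (1 - fps_X ^ (2 * t)) * (1 + fps_X ^ t)"
  have unit: "fps_nth D 0 \<noteq> 0" using assms by (simp add: D_def)
  have "hook_kernel t * D / D = hook_kernel t * (D * inverse D)"
    unfolding fps_divide_unit[OF unit] by (simp only: mult.assoc)
  also have "\<dots> = hook_kernel t" unfolding inverse_mult_eq_1'[OF unit] by simp
  finally show ?thesis using hook_kernel_mult[OF assms] unfolding D_def by simp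
qed

theorem theorem1p2:
  fixes t :: nat
  assumes "odd t"
  shows "(Abs_fps (\<lambda>n. if n = 0 then 0 else real (a_star t n))
           = (fps_X ^ t * (1 + of_nat (t - 1) * fps_X ^ t + of_nat t * fps_X ^ (2 * t)))
             / ((1 - fps_X ^ (2 * t)) * (1 + fps_X ^ t)) * odd_poch)
    \<and> (\<forall>n \<ge> 1. int (a_star t n)
           = (\<Sum>j \<in> {1..n}. (-1) ^ (j - 1) * int j * int (sc (int n - int t * int j))
                              + int t * int (sc (int n - 2 * int t * int j))))
    \<and> (\<forall>n \<ge> 1. int (a_star t n)
           = (\<Sum>j \<in> {1..n}. (-1) ^ (j - 1) * int j * int (qstar (int n - int t * int j))
                              + int t * int (qstar (int n - 2 * int t * int j))))"
proof (intro conjI allI impI)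
  have "a_star t 0 = 0"
    using a_star_eq_counts[OF assms] centre_count_eq_0[OF assms] slide_count_eq_0[OF assms]
      odd_pos[OF assms] by simp
  then have "Abs_fps (\<lambda>n. if n = 0 then 0 else real (a_star t n)) = nat_fps (a_star t)"
    by (intro fps_ext) (simp add: nat_fps_def)
  then show "Abs_fps (\<lambda>n. if n = 0 then 0 else real (a_star t n))
      = (fps_X ^ t * (1 + of_nat (t - 1) * fps_X ^ t + of_nat t * fps_X ^ (2 * t)))
        / ((1 - fps_X ^ (2 * t)) * (1 + fps_X ^ t)) * odd_poch"
    unfolding hook_kernel_eq_divide[OF odd_pos[OF assms]] nat_fps_a_star_eq[OF assms] odd_poch_eq
    by (simp add: nat_fps_def)
qed (use a_star_eq_sum[OF assms sc_eq_card_frob_sets] a_star_eq_sum[OF assms qstar_eq_card_frob_sets] in auto)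

end
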